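(* Let $p>1$ and let $\varphi$ be an analytic self-map of $\mathbb{D}$ with $\varphi\in S^p$. Then the following are equivalent: (i) $D_\varphi:S^p\to S^p$ is bounded; (ii) $C_\varphi:H^p\to S^p$ is bounded; (iii) $DC_\varphi:H^p\to H^p$ is bounded.
   Context: $\mathbb{D}$ is the open unit disk. For $p>1$, $H^p$ is the Hardy space of analytic $g$ on $\mathbb{D}$ with $\|g\|_{H^p}^p=\sup_{0<r<1}\int_0^{2\pi}|g(re^{i\theta})|^p\frac{d\theta}{2\pi}<\infty$. $S^p$ is the space of analytic $f$ on $\mathbb{D}$ with $f'\in H^p$, normed by $\|f\|_{S^p}=|f(0)|+\|f'\|_{H^p}$. For an analytic self-map $\varphi$ of $\mathbb{D}$: $C_\varphi f=f\circ\varphi$, $D_\varphi f=f'\circ\varphi$, and $DC_\varphi f=(f\circ\varphi)'$. *)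

theory Defs
  imports "HOL-Complex_Analysis.Complex_Analysis"
begin

definition hardy_mean :: "real \<Rightarrow> (complex \<Rightarrow> complex) \<Rightarrow> real \<Rightarrow> real" where
  "hardy_mean p g r =
     integral {0..2*pi} (\<lambda>t. cmod (g (complex_of_real r * cis t)) powr p) / (2*pi)"

definition in_Hp :: "real \<Rightarrow> (complex \<Rightarrow> complex) \<Rightarrow> bool" where
  "in_Hp p g \<longleftrightarrow> g holomorphic_on ball 0 1 \<and> bdd_above (hardy_mean p g ` {0<..<1})"

definition Hp_norm :: "real \<Rightarrow> (complex \<Rightarrow> complex) \<Rightarrow> real" where
  "Hp_norm p g = (SUP r\<in>{0<..<1}. hardy_mean p g r) powr (1/p)"

definition in_Sp :: "real \<Rightarrow> (complex \<Rightarrow> complex) \<Rightarrow> bool" where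
  "in_Sp p f \<longleftrightarrow> f holomorphic_on ball 0 1 \<and> in_Hp p (deriv f)"

definition Sp_norm :: "real \<Rightarrow> (complex \<Rightarrow> complex) \<Rightarrow> real" where
  "Sp_norm p f = cmod (f 0) + Hp_norm p (deriv f)"

definition self_map_disk :: "(complex \<Rightarrow> complex) \<Rightarrow> bool" where
  "self_map_disk \<phi> \<longleftrightarrow> \<phi> holomorphic_on ball 0 1 \<and> \<phi> ` ball 0 1 \<subseteq> ball 0 1"

definition comp_op :: "(complex \<Rightarrow> complex) \<Rightarrow> (complex \<Rightarrow> complex) \<Rightarrow> (complex \<Rightarrow> complex)" where
  "comp_op \<phi> f = f \<circ> \<phi>"

definition diff_comp_op :: "(complex \<Rightarrow> complex) \<Rightarrow> (complex \<Rightarrow> complex) \<Rightarrow> (complex \<Rightarrow> complex)" where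
  "diff_comp_op \<phi> f = deriv f \<circ> \<phi>"

definition comp_diff_op :: "(complex \<Rightarrow> complex) \<Rightarrow> (complex \<Rightarrow> complex) \<Rightarrow> (complex \<Rightarrow> complex)" where
  "comp_diff_op \<phi> f = deriv (f \<circ> \<phi>)"

definition bounded_op ::
  "((complex \<Rightarrow> complex) \<Rightarrow> bool) \<Rightarrow> ((complex \<Rightarrow> complex) \<Rightarrow> real) \<Rightarrow>
   ((complex \<Rightarrow> complex) \<Rightarrow> bool) \<Rightarrow> ((complex \<Rightarrow> complex) \<Rightarrow> real) \<Rightarrow>
   ((complex \<Rightarrow> complex) \<Rightarrow> (complex \<Rightarrow> complex)) \<Rightarrow> bool" where
  "bounded_op inX nX inY nY T \<longleftrightarrow>
     (\<forall>f. inX f \<longrightarrow> inY (T f)) \<and> (\<exists>C. \<forall>f. inX f \<longrightarrow> nY (T f) \<le> C * nX f)"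

end

theory Submission
  imports Defs
begin

text \<open>
  We have D_phi f = C_phi f', and every g in H^p is the derivative of its primitive F with
  F(0) = 0, for which ||F||_{S^p} = ||g||_{H^p}; hence boundedness of D_phi on S^p and of
  C_phi : H^p -> S^p are the same statement. Since ||C_phi g||_{S^p} = |g(phi(0))| + ||DC_phi g||_{H^p},
  the second equivalence reduces to boundedness of point evaluation at phi(0) on H^p. The Cauchy
  formula on a circle of radius r between |a| and 1 bounds |f(a)| by the L^1 mean of f on that
  circle, and the pointwise inequality x <= l + l^(1-p) x^p, with l slightly above ||f||_{H^p},
  bounds that L^1 mean by the H^p norm.
\<close>

lemma le_add_powr_scaled:
  fixes x l p :: real
  assumes "x \<ge> 0" "l > 0" "p \<ge> 1"
  shows "x \<le> l + l powr (1 - p) * x powr p"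
proof (cases "x \<le> l")
  case True
  then show ?thesis by (simp add: add_increasing2)
next
  case False
  have "x = l powr (1 - p) * (x * l powr (p - 1))"
    using assms by (simp add: powr_add [symmetric])
  also have "\<dots> \<le> l powr (1 - p) * (x * x powr (p - 1))"
    using False assms by (intro mult_left_mono powr_mono2) auto
  also have "x * x powr (p - 1) = x powr p"
    using False assms by (simp add: powr_diff powr_one_gt_zero_iff)
  finally show ?thesis using assms by simp
qed

lemma continuous_on_circle_param:
  assumes "continuous_on (sphere 0 r) f" "r \<ge> 0"
  shows "continuous_on UNIV (\<lambda>t. f (complex_of_real r * cis t))"
proof (rule continuous_on_compose2[OF assms(1)])
  show "continuous_on UNIV (\<lambda>t. complex_of_real r * cis t)"
    by (intro continuous_intros)
  show "(\<lambda>t. complex_of_real r * cis t) ` UNIV \<subseteq> sphere 0 r"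
    using assms(2) by (auto simp: norm_mult)
qed

lemma integrable_circle_norm_powr:
  assumes "continuous_on (sphere 0 r) f" "r \<ge> 0" "p > 0"
  shows "(\<lambda>t. cmod (f (complex_of_real r * cis t)) powr p) integrable_on {a..b}"
proof (rule integrable_continuous_interval)
  have "continuous_on UNIV (\<lambda>t. cmod (f (complex_of_real r * cis t)) powr p)"
    using assms(3)
    by (intro continuous_on_powr' continuous_on_norm continuous_on_const
          continuous_on_circle_param[OF assms(1,2)]) auto
  then show "continuous_on {a..b} (\<lambda>t. cmod (f (complex_of_real r * cis t)) powr p)"
    by (rule continuous_on_subset) simp
qed

lemma hardy_mean_nonneg: "hardy_mean p f r \<ge> 0"
proof -
  let ?h = "\<lambda>t. cmod (f (complex_of_real r * cis t)) powr p"
  have "integral {0..2*pi} ?h \<ge> 0"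
  proof (cases "?h integrable_on {0..2*pi}")
    case True
    then show ?thesis by (rule integral_nonneg) simp
  qed (simp add: not_integrable_integral)
  then show ?thesis unfolding hardy_mean_def by simp
qed

lemma hardy_mean_one_le:
  assumes "continuous_on (sphere 0 r) f" "r \<ge> 0" "p \<ge> 1" "l > 0"
  shows "hardy_mean 1 f r \<le> l + l powr (1 - p) * hardy_mean p f r"
proof -
  let ?h = "\<lambda>q t. cmod (f (complex_of_real r * cis t)) powr q"
  have int: "?h q integrable_on {0..2*pi}" if "q > 0" for q
    using integrable_circle_norm_powr[OF assms(1,2) that] .
  have int1: "?h 1 integrable_on {0..2*pi}"
    by (rule int) simp
  have intp: "?h p integrable_on {0..2*pi}"
    by (rule int) (use assms(3) in simp)
  have intm: "(\<lambda>t. l powr (1 - p) * ?h p t) integrable_on {0..2*pi}"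
    using integrable_cmul[OF intp, of "l powr (1 - p)"] by simp
  have intc: "(\<lambda>t. l + l powr (1 - p) * ?h p t) integrable_on {0..2*pi}"
    by (intro integrable_add integrable_const_ivl intm)
  have "integral {0..2*pi} (?h 1) \<le> integral {0..2*pi} (\<lambda>t. l + l powr (1 - p) * ?h p t)"
  proof (rule integral_le[OF int1 intc])
    fix t
    show "?h 1 t \<le> l + l powr (1 - p) * ?h p t"
      using le_add_powr_scaled[OF norm_ge_zero assms(4,3)] by simp
  qed
  also have "\<dots> = 2 * pi * l + l powr (1 - p) * integral {0..2*pi} (?h p)"
    by (subst integral_add) (simp_all add: intm integrable_const_ivl)
  finally show ?thesis
    unfolding hardy_mean_def by (simp add: field_simps)
qed

lemma norm_le_circle_mean:
  fixes f :: "complex \<Rightarrow> complex"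
  assumes hol: "f holomorphic_on cball 0 r" and a: "norm a < r"
  shows "norm (f a) \<le> r / (r - norm a) * hardy_mean 1 f r"
proof -
  have ra: "r - norm a > 0" using a by simp
  have r: "r > 0" using a norm_ge_zero[of a] by linarith
  have cont: "continuous_on (cball 0 r) f"
    using hol by (rule holomorphic_on_imp_continuous_on)
  have "((\<lambda>u. f u / (u - a)) has_contour_integral 2 * of_real pi * \<i> * f a) (circlepath 0 r)"
    using cont holomorphic_on_subset[OF hol ball_subset_cball] a
    by (intro Cauchy_integral_circlepath) auto
  then have cauchy: "((\<lambda>t. f (r * cis t) / (r * cis t - a) * r * \<i> * cis t)
      has_integral 2 * of_real pi * \<i> * f a) {0..2*pi}"
    by (simp add: circlepath_def has_contour_integral_part_circlepath_iff)
  define m where "m t = cmod (f (complex_of_real r * cis t))" for t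
  have m_int: "m integrable_on {0..2*pi}"
    using integrable_circle_norm_powr[of r f 1] continuous_on_subset[OF cont sphere_cball] r
    unfolding m_def by simp
  have bound: "norm (f (r * cis t) / (r * cis t - a) * r * \<i> * cis t) \<le> r / (r - norm a) * m t"
    for t
  proof -
    have "r - norm a \<le> norm (r * cis t - a)"
      using norm_triangle_ineq2[of "r * cis t" a] ra by (simp add: norm_mult)
    then have "m t / norm (r * cis t - a) \<le> m t / (r - norm a)"
      using ra by (intro divide_left_mono mult_pos_pos) (auto simp: m_def)
    then have "r * (m t / norm (r * cis t - a)) \<le> r * (m t / (r - norm a))"
      using r by (intro mult_left_mono) auto
    moreover have "norm (f (r * cis t) / (r * cis t - a) * r * \<i> * cis t)
        = r * (m t / norm (r * cis t - a))"
      using r by (simp add: norm_mult norm_divide m_def)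
    ultimately show ?thesis by simp
  qed
  have bound_int: "(\<lambda>t. r / (r - norm a) * m t) integrable_on {0..2*pi}"
    using integrable_cmul[OF m_int, of "r / (r - norm a)"] by simp
  have "norm (2 * of_real pi * \<i> * f a) \<le> integral {0..2*pi} (\<lambda>t. r / (r - norm a) * m t)"
    unfolding integral_unique[OF cauchy, symmetric]
    by (rule integral_norm_bound_integral)
       (use has_integral_integrable[OF cauchy] bound_int bound in auto)
  also have "\<dots> = 2 * pi * (r / (r - norm a) * hardy_mean 1 f r)"
    by (simp add: hardy_mean_def m_def)
  finally have "2 * pi * norm (f a) \<le> 2 * pi * (r / (r - norm a) * hardy_mean 1 f r)"
    by (simp add: norm_mult)
  then show ?thesis
    by (rule mult_left_le_imp_le) simp
qed

lemma norm_le_Hp_norm: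
  fixes f :: "complex \<Rightarrow> complex"
  assumes f: "in_Hp p f" and p: "p \<ge> 1" and a: "norm a < 1"
  shows "norm (f a) \<le> 2 * (1 + norm a) / (1 - norm a) * Hp_norm p f"
proof -
  define r where "r = (1 + norm a) / 2"
  define K where "K = (1 + norm a) / (1 - norm a)"
  define N where "N = Hp_norm p f"
  have r: "norm a < r" "r < 1" "0 < r"
    unfolding r_def using a by (auto intro: add_pos_nonneg)
  have K: "K = r / (r - norm a)" "K > 0"
    unfolding K_def r_def using a by (auto simp: field_simps intro: add_pos_nonneg)
  have hol: "f holomorphic_on ball 0 1" and bdd: "bdd_above (hardy_mean p f ` {0<..<1})"
    using f unfolding in_Hp_def by auto
  have holr: "f holomorphic_on cball 0 r"
    by (rule holomorphic_on_subset[OF hol]) (use r in auto)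
  have contr: "continuous_on (sphere 0 r) f"
    using holomorphic_on_imp_continuous_on[OF holr] by (rule continuous_on_subset) auto
  have mean_le_Sup: "hardy_mean p f r \<le> (SUP s\<in>{0<..<1}. hardy_mean p f s)"
    by (rule cSUP_upper[OF _ bdd]) (use r in auto)
  also have "\<dots> = N powr p"
  proof -
    have "(SUP s\<in>{0<..<1}. hardy_mean p f s) \<ge> 0"
      using mean_le_Sup hardy_mean_nonneg[of p f r] by linarith
    then show ?thesis
      using p unfolding N_def Hp_norm_def by (simp add: powr_powr)
  qed
  finally have mean: "hardy_mean p f r \<le> N powr p" .
  have N: "N \<ge> 0"
    unfolding N_def Hp_norm_def by simp
  have bound: "norm (f a) \<le> K * (2 * l)" if l: "l > 0" "N \<le> l" for l
  proof -
    have "l powr (1 - p) * hardy_mean p f r \<le> l powr (1 - p) * l powr p"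
      using mean powr_mono2[of p N l] N l p by (intro mult_left_mono) auto
    also have "\<dots> = l"
      using l by (simp add: powr_add [symmetric])
    finally have "hardy_mean 1 f r \<le> 2 * l"
      using hardy_mean_one_le[OF contr _ p l(1)] r by simp
    then have "K * hardy_mean 1 f r \<le> K * (2 * l)"
      using K(2) by (intro mult_left_mono) auto
    then show ?thesis
      using norm_le_circle_mean[OF holr r(1)] unfolding K(1) by linarith
  qed
  show ?thesis
  proof (rule field_le_epsilon)
    fix e :: real
    assume e: "e > 0"
    have "norm (f a) \<le> K * (2 * (N + e / (2 * K)))"
      by (rule bound) (use e K(2) N in \<open>auto intro: add_nonneg_pos\<close>)
    also have "\<dots> = 2 * K * N + e"
      using K(2) by (simp add: field_simps)
    finally show "norm (f a) \<le> 2 * (1 + norm a) / (1 - norm a) * Hp_norm p f + e"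
      unfolding K_def N_def by simp
  qed
qed

lemma hardy_mean_cong:
  assumes "\<And>z. z \<in> ball 0 1 \<Longrightarrow> f z = g z" "0 < r" "r < 1"
  shows "hardy_mean p f r = hardy_mean p g r"
  unfolding hardy_mean_def using assms by (simp add: norm_mult)

lemma in_Hp_cong:
  assumes "\<And>z. z \<in> ball 0 1 \<Longrightarrow> f z = g z"
  shows "in_Hp p f \<longleftrightarrow> in_Hp p g"
proof -
  have "hardy_mean p f ` {0<..<1} = hardy_mean p g ` {0<..<1}"
    using hardy_mean_cong[OF assms] by (intro image_cong) auto
  moreover have "f holomorphic_on ball 0 1 \<longleftrightarrow> g holomorphic_on ball 0 1"
    using assms by (intro holomorphic_cong) auto
  ultimately show ?thesis
    unfolding in_Hp_def by simp
qed

lemma Hp_norm_cong: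
  assumes "\<And>z. z \<in> ball 0 1 \<Longrightarrow> f z = g z"
  shows "Hp_norm p f = Hp_norm p g"
  unfolding Hp_norm_def using hardy_mean_cong[OF assms] by (intro arg_cong2[where f = "(powr)"] SUP_cong) auto

lemma deriv_cong_ball:
  assumes "\<And>z. z \<in> ball 0 1 \<Longrightarrow> f z = g z" "z \<in> ball 0 1"
  shows "deriv f z = deriv g z"
proof (rule deriv_cong_ev)
  show "\<forall>\<^sub>F x in nhds z. f x = g x"
    using eventually_nhds_in_open[OF open_ball assms(2)] assms(1) by (auto elim!: eventually_mono)
qed simp

lemma in_Sp_cong:
  assumes "\<And>z. z \<in> ball 0 1 \<Longrightarrow> f z = g z"
  shows "in_Sp p f \<longleftrightarrow> in_Sp p g"
  unfolding in_Sp_def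
  using assms holomorphic_cong[of "ball 0 1" "ball 0 1" f g]
    in_Hp_cong[of "deriv f" "deriv g"] deriv_cong_ball[OF assms]
  by auto

lemma Sp_norm_cong:
  assumes "\<And>z. z \<in> ball 0 1 \<Longrightarrow> f z = g z"
  shows "Sp_norm p f = Sp_norm p g"
  unfolding Sp_norm_def using assms Hp_norm_cong[of "deriv f" "deriv g"] deriv_cong_ball[OF assms]
  by simp

lemma Hp_primitive_in_Sp:
  assumes "in_Hp p g"
  obtains F where "in_Sp p F" "Sp_norm p F = Hp_norm p g" "\<And>z. z \<in> ball 0 1 \<Longrightarrow> deriv F z = g z"
proof -
  have "g holomorphic_on ball 0 1"
    using assms unfolding in_Hp_def by simp
  then obtain F where F: "\<And>z. z \<in> ball 0 1 \<Longrightarrow> (F has_field_derivative g z) (at z)"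
    using holomorphic_convex_primitive'[OF convex_ball open_ball]
    by (metis at_within_open open_ball)
  define F0 where "F0 z = F z - F 0" for z
  have F0: "(F0 has_field_derivative g z) (at z)" if "z \<in> ball 0 1" for z
    unfolding F0_def using F[OF that] by (auto intro!: derivative_eq_intros)
  have dF0: "deriv F0 z = g z" if "z \<in> ball 0 1" for z
    using F0[OF that] by (rule DERIV_imp_deriv)
  have "F0 holomorphic_on ball 0 1"
    using F0 holomorphic_on_open[OF open_ball] by blast
  then have "in_Sp p F0"
    unfolding in_Sp_def using in_Hp_cong[of "deriv F0" g] dF0 assms by simp
  moreover have "Sp_norm p F0 = Hp_norm p g"
    unfolding Sp_norm_def using Hp_norm_cong[of "deriv F0" g] dF0 by (simp add: F0_def)
  ultimately show ?thesis
    using that dF0 by blast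
qed

lemma bounded_comp_op_if_bounded_diff_comp_op:
  assumes maps: "\<phi> ` ball 0 1 \<subseteq> ball 0 1"
    and bounded: "bounded_op (in_Sp p) (Sp_norm p) (in_Sp p) (Sp_norm p) (diff_comp_op \<phi>)"
  shows "bounded_op (in_Hp p) (Hp_norm p) (in_Sp p) (Sp_norm p) (comp_op \<phi>)"
proof -
  obtain C where mem: "\<And>f. in_Sp p f \<Longrightarrow> in_Sp p (diff_comp_op \<phi> f)"
    and le: "\<And>f. in_Sp p f \<Longrightarrow> Sp_norm p (diff_comp_op \<phi> f) \<le> C * Sp_norm p f"
    using bounded unfolding bounded_op_def by blast
  have "in_Sp p (comp_op \<phi> g) \<and> Sp_norm p (comp_op \<phi> g) \<le> C * Hp_norm p g"
    if g: "in_Hp p g" for g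
  proof -
    obtain F where F: "in_Sp p F" "Sp_norm p F = Hp_norm p g"
      and dF: "\<And>z. z \<in> ball 0 1 \<Longrightarrow> deriv F z = g z"
      using Hp_primitive_in_Sp[OF g] by blast
    have eq: "diff_comp_op \<phi> F z = comp_op \<phi> g z" if "z \<in> ball 0 1" for z
    proof -
      have "\<phi> z \<in> ball 0 1"
        using maps that by blast
      then show ?thesis
        using dF by (simp add: diff_comp_op_def comp_op_def)
    qed
    show ?thesis
      using mem[OF F(1)] le[OF F(1)] F(2) in_Sp_cong[OF eq] Sp_norm_cong[OF eq] by simp
  qed
  then show ?thesis
    unfolding bounded_op_def by blast
qed

lemma bounded_diff_comp_op_if_bounded_comp_op:
  assumes "bounded_op (in_Hp p) (Hp_norm p) (in_Sp p) (Sp_norm p) (comp_op \<phi>)"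
  shows "bounded_op (in_Sp p) (Sp_norm p) (in_Sp p) (Sp_norm p) (diff_comp_op \<phi>)"
proof -
  obtain C where mem: "\<And>g. in_Hp p g \<Longrightarrow> in_Sp p (comp_op \<phi> g)"
    and le: "\<And>g. in_Hp p g \<Longrightarrow> Sp_norm p (comp_op \<phi> g) \<le> C * Hp_norm p g"
    using assms unfolding bounded_op_def by blast
  have "in_Sp p (diff_comp_op \<phi> f) \<and> Sp_norm p (diff_comp_op \<phi> f) \<le> max C 0 * Sp_norm p f"
    if f: "in_Sp p f" for f
  proof -
    have f': "in_Hp p (deriv f)"
      using f unfolding in_Sp_def by simp
    have "C * Hp_norm p (deriv f) \<le> max C 0 * Hp_norm p (deriv f)"
      by (intro mult_right_mono) (auto simp: Hp_norm_def)
    also have "\<dots> \<le> max C 0 * Sp_norm p f"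
      unfolding Sp_norm_def by (intro mult_left_mono) auto
    finally show ?thesis
      using mem[OF f'] le[OF f'] unfolding diff_comp_op_def comp_op_def by simp
  qed
  then show ?thesis
    unfolding bounded_op_def by blast
qed

lemma bounded_comp_diff_op_if_bounded_comp_op:
  assumes "bounded_op (in_Hp p) (Hp_norm p) (in_Sp p) (Sp_norm p) (comp_op \<phi>)"
  shows "bounded_op (in_Hp p) (Hp_norm p) (in_Hp p) (Hp_norm p) (comp_diff_op \<phi>)"
proof -
  obtain C where mem: "\<And>g. in_Hp p g \<Longrightarrow> in_Sp p (comp_op \<phi> g)"
    and le: "\<And>g. in_Hp p g \<Longrightarrow> Sp_norm p (comp_op \<phi> g) \<le> C * Hp_norm p g"
    using assms unfolding bounded_op_def by blast
  have "in_Hp p (comp_diff_op \<phi> g) \<and> Hp_norm p (comp_diff_op \<phi> g) \<le> C * Hp_norm p g"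
    if "in_Hp p g" for g
  proof -
    have "Hp_norm p (deriv (g \<circ> \<phi>)) \<le> Sp_norm p (g \<circ> \<phi>)"
      unfolding Sp_norm_def by simp
    then show ?thesis
      using mem[OF that] le[OF that]
      unfolding comp_diff_op_def comp_op_def in_Sp_def by simp
  qed
  then show ?thesis
    unfolding bounded_op_def by blast
qed

lemma bounded_comp_op_if_bounded_comp_diff_op:
  assumes p: "p \<ge> 1" and \<phi>: "self_map_disk \<phi>"
    and bounded: "bounded_op (in_Hp p) (Hp_norm p) (in_Hp p) (Hp_norm p) (comp_diff_op \<phi>)"
  shows "bounded_op (in_Hp p) (Hp_norm p) (in_Sp p) (Sp_norm p) (comp_op \<phi>)"
proof -
  obtain C where mem: "\<And>g. in_Hp p g \<Longrightarrow> in_Hp p (comp_diff_op \<phi> g)"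
    and le: "\<And>g. in_Hp p g \<Longrightarrow> Hp_norm p (comp_diff_op \<phi> g) \<le> C * Hp_norm p g"
    using bounded unfolding bounded_op_def by blast
  have hol: "\<phi> holomorphic_on ball 0 1" and maps: "\<phi> ` ball 0 1 \<subseteq> ball 0 1"
    using \<phi> unfolding self_map_disk_def by auto
  have \<phi>0: "\<phi> 0 \<in> ball 0 1"
    using maps by force
  define K where "K = 2 * (1 + norm (\<phi> 0)) / (1 - norm (\<phi> 0))"
  have "in_Sp p (comp_op \<phi> g) \<and> Sp_norm p (comp_op \<phi> g) \<le> (K + C) * Hp_norm p g"
    if g: "in_Hp p g" for g
  proof -
    have "g holomorphic_on ball 0 1"
      using g unfolding in_Hp_def by simp
    then have "comp_op \<phi> g holomorphic_on ball 0 1"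
      unfolding comp_op_def using hol maps by (intro holomorphic_on_compose_gen)
    moreover have "norm (g (\<phi> 0)) \<le> K * Hp_norm p g"
      unfolding K_def using \<phi>0 by (intro norm_le_Hp_norm[OF g p]) simp
    ultimately show ?thesis
      using mem[OF g] le[OF g]
      unfolding in_Sp_def Sp_norm_def comp_diff_op_def comp_op_def by (simp add: algebra_simps)
  qed
  then show ?thesis
    unfolding bounded_op_def by blast
qed

theorem theorem3p2:
  fixes p :: real and \<phi> :: "complex \<Rightarrow> complex"
  assumes "p > 1"
    and "self_map_disk \<phi>"
    and "in_Sp p \<phi>"
  shows "(bounded_op (in_Sp p) (Sp_norm p) (in_Sp p) (Sp_norm p) (diff_comp_op \<phi>)
          \<longleftrightarrow> bounded_op (in_Hp p) (Hp_norm p) (in_Sp p) (Sp_norm p) (comp_op \<phi>))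
       \<and> (bounded_op (in_Hp p) (Hp_norm p) (in_Sp p) (Sp_norm p) (comp_op \<phi>)
          \<longleftrightarrow> bounded_op (in_Hp p) (Hp_norm p) (in_Hp p) (Hp_norm p) (comp_diff_op \<phi>))"
proof -
  have maps: "\<phi> ` ball 0 1 \<subseteq> ball 0 1"
    using assms(2) unfolding self_map_disk_def by simp
  have p: "p \<ge> 1"
    using assms(1) by simp
  show ?thesis
    using bounded_comp_op_if_bounded_diff_comp_op[OF maps]
      bounded_diff_comp_op_if_bounded_comp_op
      bounded_comp_diff_op_if_bounded_comp_op
      bounded_comp_op_if_bounded_comp_diff_op[OF p assms(2)]
    by blast
qed

end
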